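(* Let $G$ be a finite group and $R_G = \{(g,h)\in G^2 \mid [g,h]=1\}$. Then $R_G$ admits a Mal'tsev polymorphism if and only if $G$ is abelian.
   Context: Here $[g,h]=ghg^{-1}h^{-1}$. For an $n$-ary relation $R\subseteq A^n$, a $d$-ary polymorphism of $R$ is a map $f:A^d\to A$ such that whenever $d$ tuples $(x_{1,1},\dots,x_{1,n}),\dots,(x_{d,1},\dots,x_{d,n})$ lie in $R$, the tuple obtained by applying $f$ coordinatewise, $(f(x_{1,1},\dots,x_{d,1}),\dots,f(x_{1,n},\dots,x_{d,n}))$, also lies in $R$. A Mal'tsev polymorphism is a ternary polymorphism $f$ with $f(x,x,y)=f(y,x,x)=y$ for all $x,y\in A$. *)

theory Defs
  imports "HOL-Algebra.Group"
begin

text \<open>An n-ary relation on A is a set of lists of length n over A.\<close>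

definition is_polymorphism ::
  "'a set \<Rightarrow> nat \<Rightarrow> 'a list set \<Rightarrow> nat \<Rightarrow> ('a list \<Rightarrow> 'a) \<Rightarrow> bool" where
  "is_polymorphism A n R d f \<longleftrightarrow>
     (\<forall>xs. length xs = d \<and> set xs \<subseteq> A \<longrightarrow> f xs \<in> A) \<and>
     (\<forall>ts. length ts = d \<and> (\<forall>t\<in>set ts. t \<in> R) \<longrightarrow>
        map (\<lambda>j. f (map (\<lambda>t. t ! j) ts)) [0..<n] \<in> R)"

definition is_maltsev_polymorphism ::
  "'a set \<Rightarrow> nat \<Rightarrow> 'a list set \<Rightarrow> ('a list \<Rightarrow> 'a) \<Rightarrow> bool" where
  "is_maltsev_polymorphism A n R f \<longleftrightarrow>
     is_polymorphism A n R 3 f \<and>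
     (\<forall>x\<in>A. \<forall>y\<in>A. f [x, x, y] = y \<and> f [y, x, x] = y)"

definition commutator :: "('a, 'b) monoid_scheme \<Rightarrow> 'a \<Rightarrow> 'a \<Rightarrow> 'a" where
  "commutator G g h = g \<otimes>\<^bsub>G\<^esub> h \<otimes>\<^bsub>G\<^esub> inv\<^bsub>G\<^esub> g \<otimes>\<^bsub>G\<^esub> inv\<^bsub>G\<^esub> h"

definition commuting_relation :: "('a, 'b) monoid_scheme \<Rightarrow> 'a list set" where
  "commuting_relation G = {[g, h] | g h. g \<in> carrier G \<and> h \<in> carrier G \<and>
                                       commutator G g h = \<one>\<^bsub>G\<^esub>}"

end

theory Submission
  imports Defs
begin

text \<open>Every relation with a Mal'tsev polymorphism f is rectangular: with (a, b), (c, b), (c, d)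
  it contains (f(a, c, c), f(b, b, d)) = (a, d). Applied to the pairs (g, 1), (1, 1), (1, h) of R_G
  this gives (g, h), so any two elements commute. Conversely, in an abelian group R_G is all of
  G x G, and x y^-1 z is a Mal'tsev operation on any group.\<close>

lemma (in group) commutator_eq_one_iff:
  assumes "g \<in> carrier G" "h \<in> carrier G"
  shows "commutator G g h = \<one> \<longleftrightarrow> g \<otimes> h = h \<otimes> g"
proof -
  have "commutator G g h \<otimes> (h \<otimes> g) = g \<otimes> h"
    using assms by (simp add: commutator_def m_assoc flip: m_assoc[of "inv h" h])
  then show ?thesis
    using assms r_cancel_one[of "h \<otimes> g" "commutator G g h"]
    by (simp add: commutator_def)
qed

lemma (in group) commuting_relation_iff:
  "[g, h] \<in> commuting_relation G \<longleftrightarrow> g \<in> carrier G \<and> h \<in> carrier G \<and> g \<otimes> h = h \<otimes> g"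
  by (auto simp: commuting_relation_def commutator_eq_one_iff)

lemma maltsev_polymorphism_rectangular:
  assumes f: "is_maltsev_polymorphism A 2 R f"
    and in_A: "a \<in> A" "b \<in> A" "c \<in> A" "d \<in> A"
    and in_R: "[a, b] \<in> R" "[c, b] \<in> R" "[c, d] \<in> R"
  shows "[a, d] \<in> R"
proof -
  let ?ts = "[[a, b], [c, b], [c, d]]"
  have "length ?ts = 3" "\<forall>t\<in>set ?ts. t \<in> R"
    using in_R by auto
  then have "map (\<lambda>j. f (map (\<lambda>t. t ! j) ?ts)) [0..<2] \<in> R"
    using f unfolding is_maltsev_polymorphism_def is_polymorphism_def by blast
  moreover have "map (\<lambda>j. f (map (\<lambda>t. t ! j) ?ts)) [0..<2] = [f [a, c, c], f [b, b, d]]"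
    by (simp add: upt_rec)
  moreover have "f [a, c, c] = a" "f [b, b, d] = d"
    using f in_A unfolding is_maltsev_polymorphism_def by auto
  ultimately show ?thesis by simp
qed

definition tuples :: "'a set \<Rightarrow> nat \<Rightarrow> 'a list set" where
  "tuples A n = {xs. length xs = n \<and> set xs \<subseteq> A}"

lemma is_polymorphism_tuples:
  assumes "\<And>xs. xs \<in> tuples A d \<Longrightarrow> f xs \<in> A"
  shows "is_polymorphism A n (tuples A n) d f"
proof -
  have "map (\<lambda>j. f (map (\<lambda>t. t ! j) ts)) [0..<n] \<in> tuples A n"
    if "length ts = d" "\<forall>t\<in>set ts. t \<in> tuples A n" for ts :: "'a list list"
  proof -
    have "map (\<lambda>t. t ! j) ts \<in> tuples A d" if "j < n" for j
      using that \<open>length ts = d\<close> \<open>\<forall>t\<in>set ts. t \<in> tuples A n\<close>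
      by (fastforce simp: tuples_def)
    then show ?thesis
      using assms by (auto simp: tuples_def)
  qed
  then show ?thesis
    using assms by (auto simp: is_polymorphism_def tuples_def)
qed

definition group_maltsev_op :: "('a, 'b) monoid_scheme \<Rightarrow> 'a list \<Rightarrow> 'a" where
  "group_maltsev_op G xs = xs ! 0 \<otimes>\<^bsub>G\<^esub> inv\<^bsub>G\<^esub> (xs ! 1) \<otimes>\<^bsub>G\<^esub> xs ! 2"

lemma (in group) group_maltsev_op_closed:
  "xs \<in> tuples (carrier G) 3 \<Longrightarrow> group_maltsev_op G xs \<in> carrier G"
  by (auto simp: tuples_def group_maltsev_op_def numeral_eq_Suc length_Suc_conv)

lemma (in group) group_maltsev_op_identities:
  assumes "x \<in> carrier G" "y \<in> carrier G"
  shows "group_maltsev_op G [x, x, y] = y" "group_maltsev_op G [y, x, x] = y"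
  using assms by (simp_all add: group_maltsev_op_def m_assoc)

lemma (in comm_group) commuting_relation_eq_tuples:
  "commuting_relation G = tuples (carrier G) 2"
proof -
  have "xs \<in> commuting_relation G" if "xs \<in> tuples (carrier G) 2" for xs
  proof -
    have "\<exists>g h. xs = [g, h]"
      using that by (auto simp: tuples_def numeral_2_eq_2 length_Suc_conv)
    then obtain g h where "xs = [g, h]"
      by blast
    then show ?thesis
      using that by (simp add: tuples_def commuting_relation_iff m_comm)
  qed
  then show ?thesis
    by (auto simp: commuting_relation_def tuples_def)
qed

lemma (in group) maltsev_polymorphism_tuples:
  "is_maltsev_polymorphism (carrier G) n (tuples (carrier G) n) (group_maltsev_op G)"
  unfolding is_maltsev_polymorphism_def
  by (simp add: is_polymorphism_tuples group_maltsev_op_closed group_maltsev_op_identities)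

theorem lemma2p4:
  fixes G :: "('a, 'b) monoid_scheme"
  assumes "group G" and "finite (carrier G)"
  shows "(\<exists>f. is_maltsev_polymorphism (carrier G) 2 (commuting_relation G) f)
           \<longleftrightarrow> comm_group G"
proof
  interpret group G by fact
  assume "\<exists>f. is_maltsev_polymorphism (carrier G) 2 (commuting_relation G) f"
  then obtain f where f: "is_maltsev_polymorphism (carrier G) 2 (commuting_relation G) f"
    by blast
  show "comm_group G"
  proof (rule group_comm_groupI)
    fix g h assume "g \<in> carrier G" "h \<in> carrier G"
    then have "[g, h] \<in> commuting_relation G"
      using maltsev_polymorphism_rectangular[OF f, of g "\<one>\<^bsub>G\<^esub>" "\<one>\<^bsub>G\<^esub>" h]
      by (simp add: commuting_relation_iff)
    then show "g \<otimes>\<^bsub>G\<^esub> h = h \<otimes>\<^bsub>G\<^esub> g"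
      by (simp add: commuting_relation_iff)
  qed
next
  assume "comm_group G"
  then have "commuting_relation G = tuples (carrier G) 2"
    by (rule comm_group.commuting_relation_eq_tuples)
  then show "\<exists>f. is_maltsev_polymorphism (carrier G) 2 (commuting_relation G) f"
    using group.maltsev_polymorphism_tuples[OF \<open>group G\<close>] by metis
qed

end
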